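(* Let $G$ be a connected graph with $n\ge 13$ vertices. Suppose one of the following holds: (1) $\Delta(G)=n-1$ and $e(G)=n+k$ for some $1\le k\le 10$; (2) $\Delta(G)=n-2$ and $e(G)=n+k$ for some $5\le k\le 10$; (3) $\Delta(G)=n-3$ and $e(G)=n+k$ for some $8\le k\le 10$. Then $\frac{q(G)}{R(G)}<\frac{n}{\sqrt{n-1}}$.
   Context: All graphs are finite and simple; $e(G)$ is the number of edges and $\Delta(G)$ the maximum degree. For a vertex $u$, $d(u)$ is its degree. The Randić index is $R(G)=\sum_{\{u,v\}\in E(G)} \frac{1}{\sqrt{d(u)d(v)}}$. The signless Laplacian is $Q=D+A$ ($D$ the diagonal degree matrix, $A$ the adjacency matrix), and $q(G)$ is its largest eigenvalue. *)

theory Defs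
  imports "HOL-Analysis.Analysis"
begin

definition simple_graph :: "'a set \<Rightarrow> 'a set set \<Rightarrow> bool" where
  "simple_graph V E \<longleftrightarrow> finite V \<and> (\<forall>e\<in>E. \<exists>u v. e = {u, v} \<and> u \<in> V \<and> v \<in> V \<and> u \<noteq> v)"

definition adj :: "'a set set \<Rightarrow> 'a \<Rightarrow> 'a \<Rightarrow> bool" where
  "adj E u v \<longleftrightarrow> {u, v} \<in> E"

definition graph_connected :: "'a set \<Rightarrow> 'a set set \<Rightarrow> bool" where
  "graph_connected V E \<longleftrightarrow> (\<forall>u\<in>V. \<forall>v\<in>V. (adj E)\<^sup>*\<^sup>* u v)"

definition deg :: "'a set set \<Rightarrow> 'a \<Rightarrow> nat" where
  "deg E u = card {v. adj E u v}"

definition max_degree :: "'a set \<Rightarrow> 'a set set \<Rightarrow> nat" where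
  "max_degree V E = Max (deg E ` V)"

definition randic :: "'a set set \<Rightarrow> real" where
  "randic E = (\<Sum>e\<in>E. 1 / sqrt (\<Prod>w\<in>e. real (deg E w)))"

definition signless_lap_eigenvalue :: "'a set \<Rightarrow> 'a set set \<Rightarrow> real \<Rightarrow> bool" where
  "signless_lap_eigenvalue V E lam \<longleftrightarrow>
     (\<exists>x :: 'a \<Rightarrow> real. (\<exists>v\<in>V. x v \<noteq> 0) \<and>
        (\<forall>u\<in>V. real (deg E u) * x u + (\<Sum>v\<in>{v\<in>V. adj E u v}. x v) = lam * x u))"

definition q_index :: "'a set \<Rightarrow> 'a set set \<Rightarrow> real" where
  "q_index V E = Max {lam. signless_lap_eigenvalue V E lam}"

end

theory Submission
  imports Defs "Jordan_Normal_Form.Spectral_Radius"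
begin

(* Write D = Delta(G), m = e(G) and f = m - D.

   Upper bound on q: for an eigenvector x of Q, evaluate the eigen-equation at a vertex u
   maximising |x_u / d_u|; this gives q d_u <= d_u^2 + sum_{v~u} d_v <= (D + (2m - D)/D) d_u,
   so q <= D - 1 + 2m/D.  That q exists at all (Q has a largest real eigenvalue) follows from the
   characteristic polynomial of Q, whose complex eigenvalues are real since Q is symmetric.

   Lower bound on R: fix a vertex w of degree D.  For a neighbour v of w,
   1/sqrt(D d_v) = (1 - (d_v - 1)/(d_v + sqrt d_v)) / sqrt D, and the deficit is charged to the
   d_v - 1 edges at v avoiding w.  Each of the f edges avoiding w keeps at least
   2(1 - 2/sqrt D)/(f + 3) of its weight, because the degrees of its end vertices sum to at most
   f + 3.  Hence R >= sqrt D + 2f(1 - 2/sqrt D)/(f + 3).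

   In the three parameter ranges the quotient of the two bounds is below n/sqrt(n - 1); this is
   a polynomial inequality in sqrt D, f and t = n - 1 - D. *)

definition kernel_eigenvalue :: "'a set \<Rightarrow> ('a \<Rightarrow> 'a \<Rightarrow> 'b::comm_ring_1) \<Rightarrow> 'b \<Rightarrow> bool" where
  "kernel_eigenvalue V K lam \<longleftrightarrow>
     (\<exists>x. (\<exists>v\<in>V. x v \<noteq> 0) \<and> (\<forall>u\<in>V. (\<Sum>y\<in>V. K u y * x y) = lam * x u))"

definition kernel_mat :: "nat \<Rightarrow> (nat \<Rightarrow> 'a) \<Rightarrow> ('a \<Rightarrow> 'a \<Rightarrow> 'b) \<Rightarrow> 'b mat" where
  "kernel_mat n b K = mat n n (\<lambda>(i, j). K (b i) (b j))"

lemma kernel_mat_mult_vec: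
  fixes K :: "'a \<Rightarrow> 'a \<Rightarrow> 'b::comm_ring_1"
  assumes b: "bij_betw b {0..<n} V"
  shows "kernel_mat n b K *\<^sub>v vec n (\<lambda>i. x (b i)) = vec n (\<lambda>i. \<Sum>y\<in>V. K (b i) y * x y)"
proof (rule eq_vecI)
  fix i assume "i < dim_vec (vec n (\<lambda>i. \<Sum>y\<in>V. K (b i) y * x y))"
  then have "i < n" by simp
  then show "(kernel_mat n b K *\<^sub>v vec n (\<lambda>i. x (b i))) $ i = vec n (\<lambda>i. \<Sum>y\<in>V. K (b i) y * x y) $ i"
    using sum.reindex_bij_betw[OF b, of "\<lambda>y. K (b i) y * x y"]
    by (simp add: kernel_mat_def scalar_prod_def atLeast0LessThan)
qed (simp add: kernel_mat_def)

lemma kernel_eigenvalue_iff_eigenvalue: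
  fixes K :: "'a \<Rightarrow> 'a \<Rightarrow> 'b::comm_ring_1"
  assumes b: "bij_betw b {0..<n} V"
  shows "kernel_eigenvalue V K lam \<longleftrightarrow> eigenvalue (kernel_mat n b K) lam"
proof
  note onto = bij_betw_imp_surj_on[OF b]
  assume "kernel_eigenvalue V K lam"
  then obtain x where x0: "\<exists>v\<in>V. x v \<noteq> 0" and x: "\<forall>u\<in>V. (\<Sum>y\<in>V. K u y * x y) = lam * x u"
    unfolding kernel_eigenvalue_def by blast
  define v where "v = vec n (\<lambda>i. x (b i))"
  from x0 onto obtain i where "i < n" "x (b i) \<noteq> 0" by auto
  then have "v \<noteq> 0\<^sub>v n" by (auto simp: v_def vec_eq_iff)
  moreover have "kernel_mat n b K *\<^sub>v v = lam \<cdot>\<^sub>v v"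
    unfolding v_def kernel_mat_mult_vec[OF b] using x onto by (auto intro!: eq_vecI)
  ultimately have "eigenvector (kernel_mat n b K) v lam"
    unfolding eigenvector_def by (simp add: kernel_mat_def v_def)
  then show "eigenvalue (kernel_mat n b K) lam" unfolding eigenvalue_def by blast
next
  note onto = bij_betw_imp_surj_on[OF b]
  assume "eigenvalue (kernel_mat n b K) lam"
  then obtain v where v: "v \<in> carrier_vec n" "v \<noteq> 0\<^sub>v n" "kernel_mat n b K *\<^sub>v v = lam \<cdot>\<^sub>v v"
    unfolding eigenvalue_def eigenvector_def by (auto simp: kernel_mat_def)
  define x where "x y = v $ the_inv_into {0..<n} b y" for y
  have xb: "x (b i) = v $ i" if "i < n" for i
    using b that by (simp add: x_def the_inv_into_f_f bij_betw_def)
  have v_eq: "v = vec n (\<lambda>i. x (b i))" using v(1) xb by (auto intro: eq_vecI)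
  obtain i where i: "i < n" "v $ i \<noteq> 0" using v(1,2) by (metis eq_vecI carrier_vecD index_zero_vec)
  show "kernel_eigenvalue V K lam"
    unfolding kernel_eigenvalue_def
  proof (intro exI conjI ballI)
    show "\<exists>u\<in>V. x u \<noteq> 0" using i onto xb by force
    fix u assume "u \<in> V"
    with onto obtain j where j: "j < n" "u = b j" by auto
    have "(\<Sum>y\<in>V. K u y * x y) = (kernel_mat n b K *\<^sub>v v) $ j"
      using j by (subst v_eq) (simp add: kernel_mat_mult_vec[OF b])
    then show "(\<Sum>y\<in>V. K u y * x y) = lam * x u" using v(3) v(1) j xb by simp
  qed
qed

lemma finite_kernel_eigenvalues:
  fixes K :: "'a \<Rightarrow> 'a \<Rightarrow> 'b::field"
  assumes "finite V"
  shows "finite {lam. kernel_eigenvalue V K lam}"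
proof -
  obtain b where b: "bij_betw b {0..<card V} V" using ex_bij_betw_nat_finite[OF assms] by blast
  have "{lam. kernel_eigenvalue V K lam} = spectrum (kernel_mat (card V) b K)"
    by (auto simp: kernel_eigenvalue_iff_eigenvalue[OF b] spectrum_def)
  then show ?thesis
    using card_finite_spectrum(1)[of "kernel_mat (card V) b K" "card V"] by (simp add: kernel_mat_def)
qed

lemma complex_kernel_eigenvalue_exists:
  fixes K :: "'a \<Rightarrow> 'a \<Rightarrow> complex"
  assumes "finite V" "V \<noteq> {}"
  shows "\<exists>mu. kernel_eigenvalue V K mu"
proof -
  obtain b where b: "bij_betw b {0..<card V} V" using ex_bij_betw_nat_finite[OF assms(1)] by blast
  have "spectrum (kernel_mat (card V) b K) \<noteq> {}"
    using assms by (intro spectrum_non_empty) (auto simp: kernel_mat_def card_gt_0_iff)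
  then show ?thesis by (auto simp: kernel_eigenvalue_iff_eigenvalue[OF b] spectrum_def)
qed

lemma symmetric_kernel_eigenvalue_real:
  fixes K :: "'a \<Rightarrow> 'a \<Rightarrow> real"
  assumes "finite V" and sym: "\<And>u v. K u v = K v u"
    and "kernel_eigenvalue V (\<lambda>u y. complex_of_real (K u y)) mu"
  shows "Im mu = 0"
proof -
  obtain z where z0: "\<exists>v\<in>V. z v \<noteq> 0"
    and z: "\<forall>u\<in>V. (\<Sum>y\<in>V. complex_of_real (K u y) * z y) = mu * z u"
    using assms(3) unfolding kernel_eigenvalue_def by blast
  define N where "N = (\<Sum>u\<in>V. (cmod (z u))\<^sup>2)"
  have "N > 0" unfolding N_def using z0 assms(1) by (auto intro: sum_pos2)
  define S where "S = (\<Sum>u\<in>V. \<Sum>y\<in>V. cnj (z u) * complex_of_real (K u y) * z y)"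
  \<comment> \<open>\<open>S = z\<^sup>* K z\<close> is real because \<open>K\<close> is real symmetric, and it equals \<open>mu \<parallel>z\<parallel>\<^sup>2\<close>.\<close>
  have "S = (\<Sum>u\<in>V. cnj (z u) * (\<Sum>y\<in>V. complex_of_real (K u y) * z y))"
    unfolding S_def by (simp add: sum_distrib_left mult.assoc)
  also have "\<dots> = (\<Sum>u\<in>V. mu * (z u * cnj (z u)))"
    using z by (intro sum.cong refl) (simp add: mult_ac)
  also have "\<dots> = mu * complex_of_real N"
    by (simp add: N_def sum_distrib_left complex_norm_square[symmetric])
  finally have S_mu: "S = mu * complex_of_real N" .
  have "cnj S = (\<Sum>u\<in>V. \<Sum>y\<in>V. cnj (z y) * complex_of_real (K y u) * z u)"
    unfolding S_def by (simp add: sym mult_ac)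
  also have "\<dots> = S" unfolding S_def by (rule sum.swap[symmetric])
  finally have "Im S = 0" by (metis Reals_cnj_iff complex_is_Real_iff)
  with S_mu \<open>N > 0\<close> show ?thesis by simp
qed

lemma kernel_eigenvalue_Re:
  fixes K :: "'a \<Rightarrow> 'a \<Rightarrow> real"
  assumes "kernel_eigenvalue V (\<lambda>u y. complex_of_real (K u y)) mu" and "Im mu = 0"
  shows "kernel_eigenvalue V K (Re mu)"
proof -
  obtain z where z0: "\<exists>v\<in>V. z v \<noteq> 0"
    and z: "\<forall>u\<in>V. (\<Sum>y\<in>V. complex_of_real (K u y) * z y) = mu * z u"
    using assms(1) unfolding kernel_eigenvalue_def by blast
  have re: "(\<Sum>y\<in>V. K u y * Re (z y)) = Re mu * Re (z u)"
    and im: "(\<Sum>y\<in>V. K u y * Im (z y)) = Re mu * Im (z u)" if "u \<in> V" for u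
    using arg_cong[OF z[rule_format, OF that], of Re] arg_cong[OF z[rule_format, OF that], of Im]
      assms(2) by (simp_all add: Re_sum Im_sum)
  from z0 obtain u where "u \<in> V" "z u \<noteq> 0" by blast
  then consider "Re (z u) \<noteq> 0" | "Im (z u) \<noteq> 0" using complex_eq_iff by force
  then show ?thesis
  proof cases
    case 1
    then show ?thesis unfolding kernel_eigenvalue_def
      using re \<open>u \<in> V\<close> by (intro exI[of _ "\<lambda>y. Re (z y)"]) auto
  next
    case 2
    then show ?thesis unfolding kernel_eigenvalue_def
      using im \<open>u \<in> V\<close> by (intro exI[of _ "\<lambda>y. Im (z y)"]) auto
  qed
qed

lemma symmetric_kernel_eigenvalue_exists:
  fixes K :: "'a \<Rightarrow> 'a \<Rightarrow> real"
  assumes "finite V" "V \<noteq> {}" and "\<And>u v. K u v = K v u"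
  shows "\<exists>lam. kernel_eigenvalue V K lam"
proof -
  obtain mu where "kernel_eigenvalue V (\<lambda>u y. complex_of_real (K u y)) mu"
    using complex_kernel_eigenvalue_exists[OF assms(1,2)] by blast
  then show ?thesis using symmetric_kernel_eigenvalue_real[of V K, OF assms(1,3)] kernel_eigenvalue_Re
    by blast
qed

lemma adj_commute: "adj E u v \<longleftrightarrow> adj E v u"
  unfolding adj_def by (simp add: insert_commute)

lemma simple_graph_finite: "simple_graph V E \<Longrightarrow> finite V"
  unfolding simple_graph_def by blast

lemma simple_graph_edgeE:
  assumes "simple_graph V E" "e \<in> E"
  obtains u v where "e = {u, v}" "u \<in> V" "v \<in> V" "u \<noteq> v"
  using assms unfolding simple_graph_def by blast

lemma simple_graph_adjD:
  assumes "simple_graph V E" "adj E u v"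
  shows "u \<in> V" "v \<in> V" "u \<noteq> v"
  using assms unfolding adj_def by (auto elim!: simple_graph_edgeE simp: doubleton_eq_iff)

lemma neighbours_subset: "simple_graph V E \<Longrightarrow> {v. adj E u v} \<subseteq> V"
  by (auto dest: simple_graph_adjD(2))

lemma finite_neighbours: "simple_graph V E \<Longrightarrow> finite {v. adj E u v}"
  using finite_subset neighbours_subset simple_graph_finite by metis

lemma adj_deg_pos: "simple_graph V E \<Longrightarrow> adj E u v \<Longrightarrow> 1 \<le> deg E u"
  unfolding deg_def using finite_neighbours
  by (metis One_nat_def Suc_leI card_gt_0_iff empty_iff mem_Collect_eq)

lemma edge_subset: "simple_graph V E \<Longrightarrow> e \<in> E \<Longrightarrow> e \<subseteq> V"
  by (erule simple_graph_edgeE) auto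

lemma finite_edges: "simple_graph V E \<Longrightarrow> finite E"
  by (rule finite_subset[of E "Pow V"]) (auto dest: edge_subset simple_graph_finite)

lemma incident_edges_bij:
  assumes sg: "simple_graph V E"
  shows "bij_betw (\<lambda>v. {u, v}) {v. adj E u v} {e\<in>E. u \<in> e}"
proof (rule bij_betwI')
  fix e assume e: "e \<in> {e\<in>E. u \<in> e}"
  then obtain a b where ab: "e = {a, b}" by (auto elim: simple_graph_edgeE[OF sg])
  then have "e = {u, b} \<or> e = {u, a}" using e by auto
  then show "\<exists>v\<in>{v. adj E u v}. e = {u, v}" using e by (auto simp: adj_def)
qed (auto simp: adj_def doubleton_eq_iff)

lemma card_incident_edges: "simple_graph V E \<Longrightarrow> card {e\<in>E. u \<in> e} = deg E u"
  unfolding deg_def using bij_betw_same_card[OF incident_edges_bij] by metis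

lemma sum_deg_eq_twice_card_edges:
  assumes sg: "simple_graph V E"
  shows "(\<Sum>u\<in>V. deg E u) = 2 * card E"
proof -
  have "(\<Sum>u\<in>V. deg E u) = (\<Sum>u\<in>V. \<Sum>e\<in>E. if u \<in> e then 1 else 0)"
    using finite_edges[OF sg]
    by (intro sum.cong refl) (simp add: card_incident_edges[OF sg, symmetric] sum.If_cases Int_def)
  also have "\<dots> = (\<Sum>e\<in>E. \<Sum>u\<in>V. if u \<in> e then 1 else 0)" by (rule sum.swap)
  also have "\<dots> = (\<Sum>e\<in>E. 2)"
  proof (intro sum.cong refl)
    fix e assume "e \<in> E"
    then have "V \<inter> e = e" "card e = 2"
      using edge_subset[OF sg] by (auto elim: simple_graph_edgeE[OF sg])
    then show "(\<Sum>u\<in>V. if u \<in> e then 1 else 0) = (2::nat)"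
      using simple_graph_finite[OF sg] by (simp add: sum.If_cases)
  qed
  finally show ?thesis by simp
qed

lemma deg_less_card:
  assumes "simple_graph V E" "u \<in> V"
  shows "deg E u < card V"
proof -
  have "{v. adj E u v} \<subseteq> V - {u}" using simple_graph_adjD[OF assms(1)] by blast
  then have "deg E u \<le> card (V - {u})"
    unfolding deg_def using assms simple_graph_finite by (intro card_mono) auto
  then show ?thesis using assms simple_graph_finite card_Diff1_less by fastforce
qed

lemma connected_deg_pos:
  assumes sg: "simple_graph V E" and "graph_connected V E" "u \<in> V" "2 \<le> card V"
  shows "1 \<le> deg E u"
proof -
  obtain v where v: "v \<in> V" "v \<noteq> u"
  proof -
    have "\<not> card V \<le> Suc 0" using assms(4) by simp
    then show thesis using that assms(3) card_le_Suc0_iff_eq[OF simple_graph_finite[OF sg]] by blast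
  qed
  have "(adj E)\<^sup>*\<^sup>* u v" using assms(2,3) v unfolding graph_connected_def by blast
  then obtain x where "adj E u x" using v(2) by (cases rule: converse_rtranclpE) auto
  then show ?thesis by (rule adj_deg_pos[OF sg])
qed

lemma deg_le_max_degree: "simple_graph V E \<Longrightarrow> u \<in> V \<Longrightarrow> deg E u \<le> max_degree V E"
  unfolding max_degree_def using simple_graph_finite by (intro Max_ge) auto

lemma max_degree_attained:
  assumes "simple_graph V E" "V \<noteq> {}"
  obtains w where "w \<in> V" "deg E w = max_degree V E"
  using Max_in[of "deg E ` V"] assms simple_graph_finite unfolding max_degree_def by fastforce

definition signless_lap_kernel :: "'a set set \<Rightarrow> 'a \<Rightarrow> 'a \<Rightarrow> real" where
  "signless_lap_kernel E u y = (if u = y then real (deg E u) else 0) + (if adj E u y then 1 else 0)"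

lemma signless_lap_kernel_commute: "signless_lap_kernel E u v = signless_lap_kernel E v u"
  by (auto simp: signless_lap_kernel_def adj_commute)

lemma sum_signless_lap_kernel:
  assumes "finite V" "u \<in> V"
  shows "(\<Sum>y\<in>V. signless_lap_kernel E u y * x y)
    = real (deg E u) * x u + (\<Sum>v\<in>{v\<in>V. adj E u v}. x v)"
proof -
  have "signless_lap_kernel E u y * x y
      = (if u = y then real (deg E u) * x y else 0) + (if adj E u y then x y else 0)" for y
    unfolding signless_lap_kernel_def by (simp add: distrib_right)
  then show ?thesis using assms by (simp add: sum.distrib sum.inter_filter)
qed

lemma signless_lap_eigenvalue_iff_kernel:
  assumes "finite V"
  shows "signless_lap_eigenvalue V E lam \<longleftrightarrow> kernel_eigenvalue V (signless_lap_kernel E) lam"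
  unfolding signless_lap_eigenvalue_def kernel_eigenvalue_def
  by (intro ex_cong1 conj_cong refl ball_cong) (simp add: sum_signless_lap_kernel[OF assms])

lemma q_index_eigenvalue:
  assumes "finite V" "V \<noteq> {}"
  shows "signless_lap_eigenvalue V E (q_index V E)"
proof -
  have "finite {lam. signless_lap_eigenvalue V E lam}" "{lam. signless_lap_eigenvalue V E lam} \<noteq> {}"
    using finite_kernel_eigenvalues[OF assms(1)]
      symmetric_kernel_eigenvalue_exists[OF assms signless_lap_kernel_commute]
    by (simp_all add: signless_lap_eigenvalue_iff_kernel[OF assms(1)])
  then show ?thesis using Max_in unfolding q_index_def by fastforce
qed

lemma signless_lap_eigenvalue_le:
  assumes sg: "simple_graph V E" and dpos: "\<forall>u\<in>V. 1 \<le> deg E u"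
    and bound: "\<forall>u\<in>V. real (deg E u)^2 + (\<Sum>v\<in>{v. adj E u v}. real (deg E v)) \<le> B * real (deg E u)"
    and "signless_lap_eigenvalue V E lam"
  shows "lam \<le> B"
proof -
  obtain x where "\<exists>v\<in>V. x v \<noteq> 0"
    and x: "\<forall>u\<in>V. real (deg E u) * x u + (\<Sum>v\<in>{v\<in>V. adj E u v}. x v) = lam * x u"
    using assms(4) unfolding signless_lap_eigenvalue_def by blast
  have fV: "finite V" by (rule simple_graph_finite[OF sg])
  have nbrs: "{v\<in>V. adj E u v} = {v. adj E u v}" for u using neighbours_subset[OF sg] by blast
  \<comment> \<open>Evaluate the eigen-equation at a vertex maximising \<open>\<bar>x u / deg u\<bar>\<close>.\<close>
  define y where "y u = x u / real (deg E u)" for u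
  have x_y: "x u = real (deg E u) * y u" if "u \<in> V" for u
    using dpos that unfolding y_def by fastforce
  have "(\<lambda>u. \<bar>y u\<bar>) ` V \<noteq> {}" using \<open>\<exists>v\<in>V. x v \<noteq> 0\<close> by blast
  then obtain u0 where u0: "u0 \<in> V" "\<bar>y u0\<bar> = Max ((\<lambda>u. \<bar>y u\<bar>) ` V)"
    using Max_in[OF finite_imageI[OF fV]] by (metis (no_types, lifting) imageE)
  define Y where "Y = \<bar>y u0\<bar>"
  have Y_max: "\<bar>y u\<bar> \<le> Y" if "u \<in> V" for u
    using that fV unfolding Y_def u0(2) by simp
  define d0 where "d0 = real (deg E u0)"
  define N where "N = {v. adj E u0 v}"
  have NV: "N \<subseteq> V" unfolding N_def by (rule neighbours_subset[OF sg])
  have "Y > 0"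
  proof -
    obtain v where "v \<in> V" "x v \<noteq> 0" using \<open>\<exists>v\<in>V. x v \<noteq> 0\<close> by blast
    then have "0 < \<bar>y v\<bar>" using x_y by fastforce
    then show ?thesis using Y_max[OF \<open>v \<in> V\<close>] by linarith
  qed
  have "d0 \<ge> 1" using dpos u0(1) unfolding d0_def by simp
  have "lam * d0 * Y^2 = y u0 * (lam * x u0)"
    using x_y[OF u0(1)] unfolding d0_def Y_def by (simp add: power2_eq_square)
  also have "\<dots> = y u0 * (d0 * x u0 + (\<Sum>v\<in>N. x v))"
    using x[rule_format, OF u0(1)] by (simp add: nbrs N_def d0_def)
  also have "(\<Sum>v\<in>N. x v) = (\<Sum>v\<in>N. real (deg E v) * y v)"
    using x_y NV by (intro sum.cong) auto
  also have "y u0 * (d0 * x u0 + \<dots>) = d0^2 * Y^2 + (\<Sum>v\<in>N. real (deg E v) * (y v * y u0))"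
    using x_y[OF u0(1)] unfolding d0_def Y_def power2_abs
    by (simp add: algebra_simps power2_eq_square sum_distrib_left)
  also have "\<dots> \<le> d0^2 * Y^2 + (\<Sum>v\<in>N. real (deg E v) * Y^2)"
  proof -
    have "y v * y u0 \<le> Y^2" if "v \<in> N" for v
    proof -
      have "y v * y u0 \<le> \<bar>y v\<bar> * Y" unfolding Y_def by (metis abs_ge_self abs_mult)
      also have "\<dots> \<le> Y * Y" using Y_max NV that by (intro mult_right_mono) (auto simp: Y_def)
      finally show ?thesis by (simp add: power2_eq_square)
    qed
    then show ?thesis by (simp add: sum_mono mult_left_mono)
  qed
  also have "\<dots> = (d0^2 + (\<Sum>v\<in>N. real (deg E v))) * Y^2"
    by (simp add: distrib_right sum_distrib_right)
  also have "\<dots> \<le> B * d0 * Y^2"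
    using bound u0(1) unfolding d0_def N_def by (intro mult_right_mono) auto
  finally show "lam \<le> B" using \<open>d0 \<ge> 1\<close> \<open>Y > 0\<close> by simp
qed

lemma sum_neighbour_deg_le:
  assumes sg: "simple_graph V E" and dpos: "\<forall>v\<in>V. 1 \<le> deg E v" and u: "u \<in> V"
  shows "(\<Sum>v\<in>{v. adj E u v}. deg E v) + card V \<le> 2 * card E + 1"
proof -
  define N where "N = {v. adj E u v}"
  have fV: "finite V" by (rule simple_graph_finite[OF sg])
  have NV: "N \<subseteq> V" unfolding N_def by (rule neighbours_subset[OF sg])
  have uVN: "u \<in> V - N" using u simple_graph_adjD(3)[OF sg] unfolding N_def by auto
  \<comment> \<open>Vertices outside \<open>N \<union> {u}\<close> still contribute at least one each to the degree sum.\<close>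
  have "card (V - N - {u}) \<le> (\<Sum>v\<in>V - N - {u}. deg E v)"
    using dpos sum_mono[of "V - N - {u}" "\<lambda>_. 1" "deg E"] by simp
  moreover have "(\<Sum>v\<in>V. deg E v) = (\<Sum>v\<in>V - N. deg E v) + (\<Sum>v\<in>N. deg E v)"
    by (rule sum.subset_diff[OF NV fV])
  moreover have "(\<Sum>v\<in>V - N. deg E v) = deg E u + (\<Sum>v\<in>V - N - {u}. deg E v)"
    using sum.remove[OF _ uVN, of "deg E"] fV by simp
  moreover have "card V = card N + 1 + card (V - N - {u})"
    using card_Diff_subset[OF finite_subset[OF NV fV] NV] card_mono[OF fV NV] uVN fV
      card_Diff_singleton[of u "V - N"] card_gt_0_iff[of "V - N"] by auto
  moreover have "deg E u = card N" unfolding N_def deg_def ..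
  ultimately show ?thesis using sum_deg_eq_twice_card_edges[OF sg] unfolding N_def by linarith
qed

lemma sq_add_le_of_bounds:
  fixes a S M D :: real
  assumes "1 \<le> a" "a \<le> D" "S \<le> a * D" "S \<le> M"
  shows "a^2 + S \<le> (D + M / D) * a"
proof (cases "a * D \<le> M")
  case True
  then have "a * a \<le> (M / D) * a" using assms(1,2) by (simp add: le_divide_eq)
  then show ?thesis using assms(3) by (simp add: power2_eq_square algebra_simps)
next
  case False
  have "0 < D" using assms(1,2) by linarith
  with False have "M / D * (D - a) \<le> a * (D - a)"
    using assms(2) by (intro mult_right_mono) (auto simp: divide_le_eq)
  moreover have "M / D * (D - a) = M - M / D * a" using \<open>0 < D\<close> by (simp add: field_simps)
  ultimately show ?thesis using assms(4) by (simp add: power2_eq_square algebra_simps)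
qed

lemma signless_lap_eigenvalue_le_max_degree:
  assumes sg: "simple_graph V E" and dpos: "\<forall>v\<in>V. 1 \<le> deg E v"
    and ev: "signless_lap_eigenvalue V E lam"
  shows "lam \<le> real (max_degree V E) - 1 + 2 * real (card E) / real (max_degree V E)"
proof -
  define D where "D = real (max_degree V E)"
  define M where "M = 2 * real (card E) - D"
  have "V \<noteq> {}" using ev unfolding signless_lap_eigenvalue_def by blast
  then obtain w where w: "w \<in> V" "deg E w = max_degree V E" using max_degree_attained[OF sg] by blast
  have "1 \<le> D" using dpos w unfolding D_def by fastforce
  have "D + 1 \<le> real (card V)" using deg_less_card[OF sg w(1)] w(2) unfolding D_def by linarith
  have "lam \<le> D + M / D"
  proof (rule signless_lap_eigenvalue_le[OF sg dpos _ ev], intro ballI)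
    fix u assume u: "u \<in> V"
    have "(\<Sum>v\<in>{v. adj E u v}. real (deg E v)) \<le> real (deg E u) * D"
      using sum_bounded_above[of "{v. adj E u v}" "\<lambda>v. real (deg E v)" D]
        deg_le_max_degree[OF sg] neighbours_subset[OF sg] unfolding D_def deg_def by force
    moreover have "(\<Sum>v\<in>{v. adj E u v}. real (deg E v)) \<le> M"
    proof -
      have "real ((\<Sum>v\<in>{v. adj E u v}. deg E v) + card V) \<le> real (2 * card E + 1)"
        using sum_neighbour_deg_le[OF sg dpos u] by (simp only: of_nat_le_iff)
      then show ?thesis using \<open>D + 1 \<le> real (card V)\<close> unfolding M_def by (simp add: of_nat_sum)
    qed
    ultimately show "real (deg E u)^2 + (\<Sum>v\<in>{v. adj E u v}. real (deg E v)) \<le> (D + M / D) * real (deg E u)"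
      using sq_add_le_of_bounds dpos u deg_le_max_degree[OF sg u] unfolding D_def by simp
  qed
  then show ?thesis using \<open>1 \<le> D\<close> unfolding M_def D_def by (simp add: diff_divide_distrib)
qed

lemma q_index_le:
  assumes "simple_graph V E" "\<forall>v\<in>V. 1 \<le> deg E v" "V \<noteq> {}"
  shows "q_index V E \<le> real (max_degree V E) - 1 + 2 * real (card E) / real (max_degree V E)"
  using signless_lap_eigenvalue_le_max_degree[OF assms(1,2)]
    q_index_eigenvalue[OF simple_graph_finite[OF assms(1)] assms(3)] .

definition randic_weight :: "'a set set \<Rightarrow> 'a set \<Rightarrow> real" where
  "randic_weight E e = 1 / sqrt (\<Prod>x\<in>e. real (deg E x))"

definition deficit_weight :: "real \<Rightarrow> real" where
  "deficit_weight d = 1 / (d + sqrt d)"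

lemma inv_sqrt_eq_deficit:
  assumes "1 \<le> d"
  shows "1 / sqrt d = 1 - (d - 1) * deficit_weight d"
proof -
  define r where "r = sqrt d"
  have "1 \<le> r" "d = r^2" using assms unfolding r_def by auto
  then have "d - 1 = (r - 1) * (r + 1)" "d + sqrt d = r * (r + 1)"
    unfolding r_def[symmetric] by (simp_all add: algebra_simps power2_eq_square)
  then have "(d - 1) * deficit_weight d = ((r - 1) * (r + 1)) / (r * (r + 1))"
    unfolding deficit_weight_def by simp
  also have "\<dots> = 1 - 1 / r" using \<open>1 \<le> r\<close> by (simp add: diff_divide_distrib)
  finally show ?thesis unfolding r_def by simp
qed

lemma incident_edges_split:
  assumes sg: "simple_graph V E" and "x \<noteq> w"
  shows "{e\<in>E. x \<in> e} = {e\<in>E. w \<notin> e \<and> x \<in> e} \<union> (if adj E w x then {{w, x}} else {})"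
proof
  show "{e\<in>E. x \<in> e} \<subseteq> {e\<in>E. w \<notin> e \<and> x \<in> e} \<union> (if adj E w x then {{w, x}} else {})"
  proof
    fix e assume e: "e \<in> {e\<in>E. x \<in> e}"
    show "e \<in> {e\<in>E. w \<notin> e \<and> x \<in> e} \<union> (if adj E w x then {{w, x}} else {})"
    proof (cases "w \<in> e")
      case True
      from e obtain a b where "e = {a, b}" by (auto elim: simple_graph_edgeE[OF sg])
      with True e \<open>x \<noteq> w\<close> have "e = {w, x}" by auto
      with e show ?thesis by (simp add: adj_def)
    qed (use e in simp)
  qed
  show "{e\<in>E. w \<notin> e \<and> x \<in> e} \<union> (if adj E w x then {{w, x}} else {}) \<subseteq> {e\<in>E. x \<in> e}"
    by (auto simp: adj_def)
qed

lemma deg_eq_card_avoiding: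
  assumes sg: "simple_graph V E" and "x \<noteq> w"
  shows "deg E x = card {e\<in>E. w \<notin> e \<and> x \<in> e} + (if adj E w x then 1 else 0)"
  using card_incident_edges[OF sg, of x] incident_edges_split[OF assms] finite_edges[OF sg]
  by (cases "adj E w x") auto

lemma card_edges_avoiding:
  assumes "simple_graph V E"
  shows "card {e\<in>E. w \<notin> e} = card E - deg E w"
proof -
  have "E = {e\<in>E. w \<in> e} \<union> {e\<in>E. w \<notin> e}" by blast
  then have "card E = deg E w + card {e\<in>E. w \<notin> e}"
    using finite_edges[OF assms] card_incident_edges[OF assms, of w]
    by (metis (no_types, lifting) card_Un_disjoint disjoint_iff finite_Un mem_Collect_eq)
  then show ?thesis by simp
qed

lemma two_le_deg:
  assumes sg: "simple_graph V E" and "adj E x w" "adj E x y" "y \<noteq> w"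
  shows "2 \<le> deg E x"
proof -
  have "card {w, y} \<le> card {v. adj E x v}"
    using assms(2,3) finite_neighbours[OF sg] by (intro card_mono) auto
  then show ?thesis using assms(4) unfolding deg_def by simp
qed

lemma deg_add_deg_le_card_avoiding:
  assumes sg: "simple_graph V E" and ab: "{a, b} \<in> E" "w \<notin> {a, b}"
  shows "deg E a + deg E b \<le> card {e\<in>E. w \<notin> e} + 3"
proof -
  define F where "F = {e\<in>E. w \<notin> e}"
  define I where "I x = {e\<in>E. w \<notin> e \<and> x \<in> e}" for x
  have fF: "finite F" unfolding F_def using finite_edges[OF sg] by simp
  have "a \<noteq> b" using simple_graph_adjD(3)[OF sg] ab(1) by (auto simp: adj_def)
  have "I a \<inter> I b \<subseteq> {{a, b}}"
  proof
    fix e assume "e \<in> I a \<inter> I b"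
    then have "e \<in> E" "a \<in> e" "b \<in> e" unfolding I_def by auto
    then obtain u v where "e = {u, v}" using simple_graph_edgeE[OF sg] by metis
    with \<open>a \<in> e\<close> \<open>b \<in> e\<close> \<open>a \<noteq> b\<close> show "e \<in> {{a, b}}" by auto
  qed
  then have "card (I a \<inter> I b) \<le> 1" using card_mono[of "{{a, b}}"] by fastforce
  moreover have "card (I a \<union> I b) \<le> card F"
    using fF by (intro card_mono) (auto simp: I_def F_def)
  moreover have "card (I a) + card (I b) = card (I a \<union> I b) + card (I a \<inter> I b)"
    by (intro card_Un_Int; rule finite_subset[OF _ fF]) (auto simp: I_def F_def)
  moreover have "deg E a \<le> card (I a) + 1" "deg E b \<le> card (I b) + 1"
    using deg_eq_card_avoiding[OF sg, of a w] deg_eq_card_avoiding[OF sg, of b w] ab(2)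
    unfolding I_def by auto
  ultimately show ?thesis unfolding F_def by linarith
qed

lemma randic_weight_at_neighbour:
  assumes sg: "simple_graph V E" and "adj E w v"
  shows "randic_weight E {w, v}
    = (1 - real (card {e\<in>E. w \<notin> e \<and> v \<in> e}) * deficit_weight (real (deg E v))) / sqrt (real (deg E w))"
proof -
  have "w \<noteq> v" using simple_graph_adjD(3)[OF sg assms(2)] .
  then have "real (deg E v) - 1 = real (card {e\<in>E. w \<notin> e \<and> v \<in> e})"
    using deg_eq_card_avoiding[OF sg, of v w] assms(2) by simp
  moreover have "1 \<le> real (deg E v)" using adj_deg_pos[OF sg] assms(2) adj_commute by fastforce
  moreover have "randic_weight E {w, v} = (1 / sqrt (real (deg E v))) / sqrt (real (deg E w))"
    using \<open>w \<noteq> v\<close> by (simp add: randic_weight_def real_sqrt_mult)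
  ultimately show ?thesis using inv_sqrt_eq_deficit[of "real (deg E v)"] by simp
qed

lemma sum_card_filter_mult:
  fixes g :: "'a \<Rightarrow> real"
  assumes "finite F"
  shows "(\<Sum>v\<in>L. real (card {e\<in>F. v \<in> e}) * g v) = (\<Sum>e\<in>F. \<Sum>v\<in>L. if v \<in> e then g v else 0)"
proof -
  have "real (card {e\<in>F. v \<in> e}) * g v = (\<Sum>e\<in>F. if v \<in> e then g v else 0)" for v
    using assms by (simp add: sum.inter_filter[symmetric])
  then show ?thesis by (simp add: sum.swap[of _ F L])
qed

lemma randic_split_at_vertex:
  assumes sg: "simple_graph V E" and "0 < deg E w"
  shows "randic E = sqrt (real (deg E w)) +
    (\<Sum>e\<in>{e\<in>E. w \<notin> e}. randic_weight E e
       - (\<Sum>v\<in>e. if adj E w v then deficit_weight (real (deg E v)) else 0) / sqrt (real (deg E w)))"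
proof -
  define D where "D = real (deg E w)"
  define L where "L = {v. adj E w v}"
  define F where "F = {e\<in>E. w \<notin> e}"
  define g where "g v = deficit_weight (real (deg E v))" for v
  have fE: "finite E" by (rule finite_edges[OF sg])
  have fF: "finite F" unfolding F_def using fE by simp
  have fL: "finite L" unfolding L_def by (rule finite_neighbours[OF sg])
  have "D / sqrt D = sqrt D" using assms(2) unfolding D_def by (simp add: real_div_sqrt)
  have "E = {e\<in>E. w \<in> e} \<union> F" "{e\<in>E. w \<in> e} \<inter> F = {}" unfolding F_def by auto
  then have "randic E = (\<Sum>e\<in>{e\<in>E. w \<in> e}. randic_weight E e) + (\<Sum>e\<in>F. randic_weight E e)"
    using sum.union_disjoint[of "{e\<in>E. w \<in> e}" F "randic_weight E"] fE fF
    unfolding randic_def randic_weight_def by simp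
  also have "(\<Sum>e\<in>{e\<in>E. w \<in> e}. randic_weight E e) = (\<Sum>v\<in>L. randic_weight E {w, v})"
    unfolding L_def using sum.reindex_bij_betw[OF incident_edges_bij[OF sg]] by metis
  also have "\<dots> = (\<Sum>v\<in>L. (1 - real (card {e\<in>F. v \<in> e}) * g v) / sqrt D)"
  proof -
    have "{e\<in>F. v \<in> e} = {e\<in>E. w \<notin> e \<and> v \<in> e}" for v unfolding F_def by blast
    then show ?thesis
      by (intro sum.cong) (simp_all add: L_def g_def D_def randic_weight_at_neighbour[OF sg])
  qed
  also have "\<dots> = sqrt D - (\<Sum>v\<in>L. real (card {e\<in>F. v \<in> e}) * g v) / sqrt D"
    using \<open>D / sqrt D = sqrt D\<close>
    by (simp add: sum_divide_distrib[symmetric] sum_subtractf L_def D_def deg_def diff_divide_distrib)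
  also have "(\<Sum>v\<in>L. real (card {e\<in>F. v \<in> e}) * g v) = (\<Sum>e\<in>F. \<Sum>v\<in>L. if v \<in> e then g v else 0)"
    by (rule sum_card_filter_mult[OF fF])
  also have "\<dots> = (\<Sum>e\<in>F. \<Sum>v\<in>e. if adj E w v then g v else 0)"
  proof (rule sum.cong[OF refl])
    fix e assume "e \<in> F"
    then have "finite e" using sg unfolding F_def by (auto elim: simple_graph_edgeE)
    then show "(\<Sum>v\<in>L. if v \<in> e then g v else 0) = (\<Sum>v\<in>e. if adj E w v then g v else 0)"
      using sum.inter_restrict[OF fL, of g e] sum.inter_restrict[OF \<open>finite e\<close>, of g L]
      by (simp add: Int_commute L_def)
  qed
  finally show ?thesis
    unfolding F_def g_def D_def by (simp add: sum_subtractf sum_divide_distrib)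
qed

lemma sum_sq_le_of_sq_ge_two:
  fixes a b :: real
  assumes "0 \<le> a" "2 \<le> a^2" "0 \<le> b" "2 \<le> b^2" and "a^2 + b^2 \<le> 16"
  shows "a^2 + b^2 \<le> 2 * (a * b) + a + b + 2"
proof -
  have ge: "7/5 \<le> x" if "0 \<le> x" "2 \<le> x^2" for x :: real
  proof (rule ccontr)
    assume "\<not> 7/5 \<le> x"
    then have "x^2 < (7/5)^2" using that(1) by (intro power_strict_mono) auto
    then show False using that(2) by (simp add: power2_eq_square)
  qed
  have "0 \<le> (a - 7/5) * (b - 7/5)" using ge assms(1-4) by simp
  then have ab: "7/5 * (a + b) - 49/25 \<le> a * b" by (simp add: algebra_simps)
  have sq: "a^2 + b^2 = (a + b)^2 - 2 * (a * b)" by (simp add: power2_eq_square algebra_simps)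
  have lin_small: "S \<le> 2 * Q + p + 2"
    if "P \<le> 33/5 * p - 121/20" "S = P - 2 * Q" "7/5 * p - 49/25 \<le> Q" for S P Q p :: real
    using that by linarith
  have lin_large: "S \<le> 2 * Q + p + 2"
    if "\<not> p \<le> 118/25" "7/5 * p - 49/25 \<le> Q" "S \<le> 16" for S Q p :: real
    using that by linarith
  show ?thesis
  proof (cases "a + b \<le> 118/25")
    case True
    have "(a + b - 11/10) * (a + b - 11/2) \<le> 0"
      using True ge[of a] ge[of b] assms(1-4) by (intro mult_nonneg_nonpos) auto
    then have "(a + b)^2 \<le> 33/5 * (a + b) - 121/20" by (simp add: power2_eq_square algebra_simps)
    with lin_small[OF _ sq ab] show ?thesis by simp
  next
    case False
    with lin_large[OF _ ab assms(5)] show ?thesis by simp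
  qed
qed

lemma deficit_weights_le:
  fixes du dv :: real
  assumes du: "1 \<le> du" "pu \<longrightarrow> 2 \<le> du" and dv: "1 \<le> dv" "pv \<longrightarrow> 2 \<le> dv"
    and sum: "du + dv \<le> 16"
  shows "(if pu then deficit_weight du else 0) + (if pv then deficit_weight dv else 0) \<le> 2 / sqrt (du * dv)"
proof -
  define a b where "a = sqrt du" and "b = sqrt dv"
  have sq: "du = a^2" "dv = b^2" using du dv unfolding a_def b_def by auto
  have "a^2 \<le> 4^2" "b^2 \<le> 4^2" using sq du dv sum by simp_all
  then have a: "1 \<le> a" "a \<le> 4" and b: "1 \<le> b" "b \<le> 4"
    using power2_le_imp_le[of a 4] power2_le_imp_le[of b 4] du dv unfolding a_def b_def by auto
  have cancel: "x * y * (1 / (x^2 + x)) = y / (x + 1)" if "1 \<le> x" for x y :: real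
  proof -
    have "x^2 + x = x * (x + 1)" by (simp add: power2_eq_square algebra_simps)
    then show ?thesis using that by simp
  qed
  have "sqrt du = a" "sqrt dv = b" unfolding a_def b_def by simp_all
  then have wa: "a * b * deficit_weight du = b / (a + 1)" and wb: "a * b * deficit_weight dv = a / (b + 1)"
    using cancel[OF a(1), of b] cancel[OF b(1), of a] unfolding deficit_weight_def
    by (simp_all add: sq mult.commute)
  have "b / (a + 1) \<le> 2" "a / (b + 1) \<le> 2" using a b by (simp_all add: divide_simps)
  moreover have "b / (a + 1) + a / (b + 1) \<le> 2" if pu pv
  proof -
    have "a^2 + b^2 \<le> 2 * (a * b) + a + b + 2"
      using sum_sq_le_of_sq_ge_two[of a b] a b sq du dv sum that by auto
    then have "b * (b + 1) + a * (a + 1) \<le> 2 * ((a + 1) * (b + 1))"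
      by (simp add: algebra_simps power2_eq_square)
    moreover have "b / (a + 1) + a / (b + 1) = (b * (b + 1) + a * (a + 1)) / ((a + 1) * (b + 1))"
      using a b by (simp add: field_simps)
    moreover have "0 < (a + 1) * (b + 1)" using a b by simp
    ultimately show ?thesis by (simp add: divide_le_eq)
  qed
  ultimately have "a * b * ((if pu then deficit_weight du else 0) + (if pv then deficit_weight dv else 0)) \<le> 2"
    using wa wb by (cases pu; cases pv) (auto simp: distrib_left)
  moreover have "sqrt (du * dv) = a * b" unfolding a_def b_def by (simp add: real_sqrt_mult)
  ultimately show ?thesis using a b by (simp add: field_simps)
qed

lemma edge_gain_lower_bound:
  fixes du dv D s :: real
  assumes "1 \<le> du" "pu \<longrightarrow> 2 \<le> du" "1 \<le> dv" "pv \<longrightarrow> 2 \<le> dv"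
    and "du + dv \<le> s" "s \<le> 16" "4 \<le> D"
  shows "2 * (1 - 2 / sqrt D) / s
    \<le> 1 / sqrt (du * dv) - ((if pu then deficit_weight du else 0) + (if pv then deficit_weight dv else 0)) / sqrt D"
proof -
  define c where "c = sqrt (du * dv)"
  define K where "K = (if pu then deficit_weight du else 0) + (if pv then deficit_weight dv else 0)"
  have "2 \<le> sqrt D" using real_sqrt_le_mono[OF assms(7)] by simp
  then have "2 / sqrt D \<le> 1" using assms(7) by (simp add: divide_le_eq)
  have "1 * 1 \<le> du * dv" using assms(1,3) by (intro mult_mono) auto
  then have "1 \<le> c" unfolding c_def by simp
  have "c \<le> (du + dv) / 2" unfolding c_def using assms(1,3) by (intro arith_geo_mean_sqrt) auto
  then have "2 * c \<le> du + dv" by simp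
  then have "2 * c \<le> s" using assms(5) by linarith
  have "K \<le> 2 / c" using deficit_weights_le[OF assms(1-4)] assms(5,6) unfolding c_def K_def by linarith
  have "2 * (1 - 2 / sqrt D) / s = (1 - 2 / sqrt D) / (s / 2)" by simp
  also have "\<dots> \<le> (1 - 2 / sqrt D) / c"
    using \<open>2 / sqrt D \<le> 1\<close> \<open>1 \<le> c\<close> \<open>2 * c \<le> s\<close> by (intro divide_left_mono) auto
  also have "\<dots> = 1 / c - (2 / c) / sqrt D" by (simp add: diff_divide_distrib)
  also have "\<dots> \<le> 1 / c - K / sqrt D"
    using divide_right_mono[OF \<open>K \<le> 2 / c\<close>, of "sqrt D"] assms(7) by simp
  finally show ?thesis unfolding c_def K_def .
qed

lemma randic_weight_avoiding_ge:
  assumes sg: "simple_graph V E" and e: "e \<in> E" "w \<notin> e"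
    and "4 \<le> deg E w" "card E \<le> deg E w + 13"
  shows "2 * (1 - 2 / sqrt (real (deg E w))) / (real (card E - deg E w) + 3)
    \<le> randic_weight E e
       - (\<Sum>v\<in>e. if adj E w v then deficit_weight (real (deg E v)) else 0) / sqrt (real (deg E w))"
proof -
  obtain a b where ab: "e = {a, b}" "a \<in> V" "b \<in> V" "a \<noteq> b"
    by (rule simple_graph_edgeE[OF sg e(1)])
  have "adj E a b" using e(1) ab(1) by (simp add: adj_def)
  have "adj E b a" using \<open>adj E a b\<close> by (simp add: adj_commute)
  have "w \<noteq> a" "w \<noteq> b" using e(2) ab(1) by auto
  have "1 \<le> real (deg E a)" "1 \<le> real (deg E b)"
    using adj_deg_pos[OF sg \<open>adj E a b\<close>] adj_deg_pos[OF sg \<open>adj E b a\<close>] by simp_all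
  moreover have "2 \<le> real (deg E a)" if "adj E w a"
    using two_le_deg[OF sg that[unfolded adj_commute[of E w]] \<open>adj E a b\<close>] \<open>w \<noteq> b\<close> by simp
  moreover have "2 \<le> real (deg E b)" if "adj E w b"
    using two_le_deg[OF sg that[unfolded adj_commute[of E w]] \<open>adj E b a\<close>] \<open>w \<noteq> a\<close> by simp
  moreover have "deg E a + deg E b \<le> card E - deg E w + 3"
    using deg_add_deg_le_card_avoiding[OF sg, of a b w] e ab(1)
    unfolding card_edges_avoiding[OF sg] by simp
  then have "real (deg E a) + real (deg E b) \<le> real (card E - deg E w) + 3" by linarith
  moreover have "real (card E - deg E w) + 3 \<le> 16" "4 \<le> real (deg E w)" using assms(4,5) by linarith+
  ultimately have "2 * (1 - 2 / sqrt (real (deg E w))) / (real (card E - deg E w) + 3)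
    \<le> 1 / sqrt (real (deg E a) * real (deg E b))
       - ((if adj E w a then deficit_weight (real (deg E a)) else 0)
          + (if adj E w b then deficit_weight (real (deg E b)) else 0)) / sqrt (real (deg E w))"
    by (intro edge_gain_lower_bound) blast+
  then show ?thesis using ab by (simp add: randic_weight_def)
qed

lemma randic_lower_bound:
  assumes sg: "simple_graph V E" and "4 \<le> deg E w" "card E \<le> deg E w + 13"
  shows "sqrt (real (deg E w)) + real (card E - deg E w)
           * (2 * (1 - 2 / sqrt (real (deg E w))) / (real (card E - deg E w) + 3))
         \<le> randic E"
proof -
  let ?c = "2 * (1 - 2 / sqrt (real (deg E w))) / (real (card E - deg E w) + 3)"
  have "real (card {e\<in>E. w \<notin> e}) * ?c
    \<le> (\<Sum>e\<in>{e\<in>E. w \<notin> e}. randic_weight E e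
         - (\<Sum>v\<in>e. if adj E w v then deficit_weight (real (deg E v)) else 0) / sqrt (real (deg E w)))"
    using randic_weight_avoiding_ge[OF sg _ _ assms(2,3)] by (intro sum_bounded_below) auto
  then show ?thesis
    using randic_split_at_vertex[OF sg, of w] card_edges_avoiding[OF sg, of w] assms(2) by simp
qed

lemma gap_polynomial_pos:
  fixes u f t s :: real
  assumes s: "s \<ge> 79/25"
    and c: "(t = 0 \<and> u \<ge> 12 \<and> 2 \<le> f \<and> f \<le> 11) \<or> (t = 1 \<and> u \<ge> 11 \<and> 7 \<le> f \<and> f \<le> 12)
            \<or> (t = 2 \<and> u \<ge> 10 \<and> 11 \<le> f \<and> f \<le> 13)"
  shows "(f+3)*t*(u^2 - u - 2*f) + 4*f*u*((s-2)*(u+1+t) - (f+3)) > 0"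
proof -
  have u0: "u \<ge> 10" "f > 0" using c by auto
  have uu: "u^2 \<ge> 10*u" using u0 by (simp add: power2_eq_square mult_right_mono)
  have fu: "4*f*u > 0" using u0 by simp
  define X where "X = (s-2)*(u+1+t)"
  have "X \<ge> 29/25*(u+1+t)" unfolding X_def using s c by (intro mult_right_mono) auto
  then have sm: "25*X \<ge> 29*u+29+29*t" by simp
  from c consider (a) "t = 0" "u \<ge> 12" "2 \<le> f" "f \<le> 11" | (b) "t = 1" "u \<ge> 11" "7 \<le> f" "f \<le> 12"
    | (c) "t = 2" "u \<ge> 10" "11 \<le> f" "f \<le> 13" by blast
  then have main: "(f+3)*t*(u^2 - u - 2*f) + 4*f*u*(X - (f+3)) > 0"
  proof cases
    case a
    have "X - (f+3) > 0" using sm a by linarith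
    then have "4*f*u*(X - (f+3)) > 0" using fu by simp
    then show ?thesis using a by simp
  next
    case b
    have "X - (f+3) > 0" using sm b by linarith
    then have "4*f*u*(X - (f+3)) > 0" using fu by simp
    moreover have "(f+3)*t*(u^2 - u - 2*f) \<ge> 0" using b uu by simp
    ultimately show ?thesis by linarith
  next
    case c
    have "25*X - 25*f - 75 \<ge> -23" using sm c by linarith
    then have B2: "X - (f+3) \<ge> -23/25" by simp
    have "4*f*u*(X - (f+3)) \<ge> 4*f*u*(-23/25)"
      using B2 fu by (intro mult_left_mono) auto
    then have A1: "4*f*u*(X - (f+3)) \<ge> -(92/25)*(f*u)" by simp
    have "5*u^2 - 5*u - 10*f \<ge> 32 * u" using uu c by linarith
    then have "u^2 - u - 2*f \<ge> 32/5 * u" by linarith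
    then have P: "(f+3)*(u^2 - u - 2*f) \<ge> (f+3)*(32/5*u)" using c by (intro mult_left_mono) auto
    have "64/5*(f*u) + 192/5*u = 2*((f+3)*(32/5*u))" by (simp add: algebra_simps)
    also have "\<dots> \<le> 2*((f+3)*(u^2 - u - 2*f))" using P by linarith
    also have "\<dots> = (f+3)*t*(u^2 - u - 2*f)" using c by simp
    finally have A2: "(f+3)*t*(u^2 - u - 2*f) \<ge> 64/5*(f*u) + 192/5*u" .
    have A3: "f*u \<ge> 0" "u > 0" using c by auto
    show ?thesis using A1 A2 A3 by linarith
  qed
  then show ?thesis unfolding X_def .
qed

lemma ratio_inequality_of_gap:
  fixes f t s r :: real
  assumes s: "s > 0" and f: "f \<ge> 0" and t: "t \<ge> 0"
    and r: "r \<ge> 0" "r^2 = s^2 + t"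
    and G: "(f+3)*t*((s^2)^2 - s^2 - 2*f) + 4*f * s^2*((s-2)*(s^2+1+t) - (f+3)) > 0"
  shows "(s^2 + 1 + 2*f/s^2) * r < (s^2+1+t) * (s + f * (2 * (1 - 2/s) / (f+3)))"
proof -
  have u: "s^2 > 0" using s by simp
  have rle: "r \<le> s + t / (2 * s)"
  proof -
    have "(s + t / (2 * s))^2 = s^2 + t + (t / (2 * s))^2" using s by (simp add: power2_eq_square field_simps)
    then have "r^2 \<le> (s + t / (2 * s))^2" using r by simp
    moreover have "s + t / (2 * s) \<ge> 0" using s t by simp
    ultimately show ?thesis using r(1) power2_le_imp_le by blast
  qed
  have X: "(s^2 + 1 + 2*f/s^2) * r \<le> (s^2 + 1 + 2*f/s^2) * (s + t / (2 * s))"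
    using rle u f by (intro mult_left_mono) auto
  \<comment> \<open>After \<open>r \<le> s + t/(2s)\<close> and clearing the denominator \<open>c\<close>, the two sides differ by exactly
    the polynomial of \<open>gap_polynomial_pos\<close>.\<close>
  define c where "c = 2 * s^2 * s*(f+3)"
  have c: "c > 0" unfolding c_def using u s f by simp
  have L: "(s^2 + 1 + 2*f/s^2) * (s + t / (2 * s)) * c = ((s^2)^2+s^2+2*f)*(2 * s^2+t)*(f+3)"
    unfolding c_def using u s f by (simp add: field_simps power2_eq_square)
  have R: "(s^2+1+t) * (s + f * (2 * (1 - 2/s) / (f+3))) * c = 2 * s^2*(s^2+1+t)*(s^2*(f+3)+2*f*(s-2))"
  proof -
    have "f * s + s * 3 > 0" using s f by (simp add: add_nonneg_pos)
    then have nz: "f + 3 \<noteq> 0" "s \<noteq> 0" "s*(f+3) \<noteq> 0" "f * s + s * 3 \<noteq> 0" using s f by (auto simp: algebra_simps)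
    have "f * (2 * (1 - 2/s) / (f+3)) = 2*f*(s-2)/(s*(f+3))" using nz by (simp add: field_simps)
    then show ?thesis unfolding c_def using nz by (simp add: field_simps power2_eq_square)
  qed
  have P: "((s^2)^2+s^2+2*f)*(2 * s^2+t)*(f+3) < 2 * s^2*(s^2+1+t)*(s^2*(f+3)+2*f*(s-2))"
  proof -
    have "2 * s^2*(s^2+1+t)*(s^2*(f+3)+2*f*(s-2)) - ((s^2)^2+s^2+2*f)*(2 * s^2+t)*(f+3)
        = (f+3)*t*((s^2)^2 - s^2 - 2*f) + 4*f * s^2*((s-2)*(s^2+1+t) - (f+3))"
      by (simp add: algebra_simps power2_eq_square)
    then show ?thesis using G by linarith
  qed
  have "(s^2 + 1 + 2*f/s^2) * (s + t / (2 * s)) < (s^2+1+t) * (s + f * (2 * (1 - 2/s) / (f+3)))"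
    using P L R c by (metis mult_less_cancel_right_pos)
  then show ?thesis using X by linarith
qed

lemma parameter_inequality:
  fixes D f t :: nat
  assumes "(t = 0 \<and> 12 \<le> D \<and> 2 \<le> f \<and> f \<le> 11) \<or> (t = 1 \<and> 11 \<le> D \<and> 7 \<le> f \<and> f \<le> 12)
    \<or> (t = 2 \<and> 10 \<le> D \<and> 11 \<le> f \<and> f \<le> 13)"
  shows "(real D - 1 + 2 * real (D + f) / real D) * sqrt (real (D + t))
    < real (D + 1 + t) * (sqrt (real D) + real f * (2 * (1 - 2 / sqrt (real D)) / (real f + 3)))"
proof -
  define s where "s = sqrt (real D)"
  have "10 \<le> D" using assms by auto
  then have "0 < s" and s2: "s^2 = real D" unfolding s_def by auto
  \<comment> \<open>\<open>79/25\<close> is a rational lower bound for \<open>sqrt 10\<close>.\<close>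
  have "(79/25)^2 \<le> real D" using \<open>10 \<le> D\<close> unfolding power2_eq_square by linarith
  then have "sqrt ((79/25)^2) \<le> s" unfolding s_def by (rule real_sqrt_le_mono)
  then have "79/25 \<le> s" by simp
  have "(real f + 3) * real t * ((s^2)^2 - s^2 - 2 * real f)
      + 4 * real f * s^2 * ((s - 2) * (s^2 + 1 + real t) - (real f + 3)) > 0"
    using assms by (intro gap_polynomial_pos[OF \<open>79/25 \<le> s\<close>]) (auto simp: s2)
  then have "(s^2 + 1 + 2 * real f / s^2) * sqrt (s^2 + real t)
      < (s^2 + 1 + real t) * (s + real f * (2 * (1 - 2 / s) / (real f + 3)))"
    using \<open>0 < s\<close> by (intro ratio_inequality_of_gap) auto
  moreover have "real D - 1 + 2 * real (D + f) / real D = s^2 + 1 + 2 * real f / s^2"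
    using \<open>10 \<le> D\<close> unfolding s2 by (simp add: field_simps)
  ultimately show ?thesis unfolding s2 s_def by (simp add: add_ac)
qed

lemma divide_lt_divide_of_bounds:
  fixes q R B L a r :: real
  assumes "q \<le> B" "0 \<le> B" "L \<le> R" "0 < a" "0 < r" "B * r < a * L"
  shows "q / R < a / r"
proof -
  have "0 \<le> B * r" using assms(2,5) by simp
  then have "0 < a * L" using assms(6) by linarith
  then have "0 < L" using assms(4) by (simp add: zero_less_mult_iff)
  have "q / R \<le> B / R" using assms(1,3) \<open>0 < L\<close> by (simp add: divide_right_mono)
  also have "\<dots> \<le> B / L" using assms(2,3) \<open>0 < L\<close> by (simp add: divide_left_mono)
  also have "\<dots> < a / r" using assms(5,6) \<open>0 < L\<close> by (simp add: divide_less_eq field_simps)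
  finally show ?thesis .
qed

theorem lemma3p10:
  fixes V :: "'a set" and E :: "'a set set" and n k :: nat
  assumes "simple_graph V E"
    and "graph_connected V E"
    and "card V = n"
    and "n \<ge> 13"
    and "(max_degree V E = n - 1 \<and> card E = n + k \<and> 1 \<le> k \<and> k \<le> 10)
       \<or> (max_degree V E = n - 2 \<and> card E = n + k \<and> 5 \<le> k \<and> k \<le> 10)
       \<or> (max_degree V E = n - 3 \<and> card E = n + k \<and> 8 \<le> k \<and> k \<le> 10)"
  shows "q_index V E / randic E < real n / sqrt (real n - 1)"
proof -
  define D where "D = max_degree V E"
  define f where "f = card E - D"
  obtain t where n: "n = D + 1 + t" and Df: "(t = 0 \<and> 12 \<le> D \<and> 2 \<le> f \<and> f \<le> 11)
    \<or> (t = 1 \<and> 11 \<le> D \<and> 7 \<le> f \<and> f \<le> 12) \<or> (t = 2 \<and> 10 \<le> D \<and> 11 \<le> f \<and> f \<le> 13)"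
  proof -
    consider "D = n - 1" "card E = n + k" "1 \<le> k" "k \<le> 10"
      | "D = n - 2" "card E = n + k" "5 \<le> k" "k \<le> 10"
      | "D = n - 3" "card E = n + k" "8 \<le> k" "k \<le> 10"
      using assms(5) unfolding D_def by blast
    then show thesis
      by cases (use assms(4) that[of 0] that[of 1] that[of 2] in \<open>simp_all add: f_def\<close>)
  qed
  have "V \<noteq> {}" using assms(3,4) by auto
  have dpos: "\<forall>v\<in>V. 1 \<le> deg E v" using connected_deg_pos[OF assms(1,2)] assms(3,4) by auto
  obtain w where "w \<in> V" "deg E w = D"
    using max_degree_attained[OF assms(1) \<open>V \<noteq> {}\<close>] unfolding D_def by blast
  have q: "q_index V E \<le> real D - 1 + 2 * real (D + f) / real D"
    using q_index_le[OF assms(1) dpos \<open>V \<noteq> {}\<close>] Df unfolding D_def f_def by auto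
  have R: "sqrt (real D) + real f * (2 * (1 - 2 / sqrt (real D)) / (real f + 3)) \<le> randic E"
    using randic_lower_bound[OF assms(1), of w] \<open>deg E w = D\<close> Df unfolding f_def by auto
  have "0 \<le> real D - 1 + 2 * real (D + f) / real D" using Df by (intro add_nonneg_nonneg) auto
  moreover have "(real D - 1 + 2 * real (D + f) / real D) * sqrt (real n - 1)
    < real n * (sqrt (real D) + real f * (2 * (1 - 2 / sqrt (real D)) / (real f + 3)))"
    using parameter_inequality[OF Df] unfolding n by simp
  ultimately show ?thesis using divide_lt_divide_of_bounds[OF q _ R] assms(4) by simp
qed

end
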